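(* Let $R$ be a ring. If $Q_l(R)$ is a left artinian ring, then $S_0(R)=\mathcal C_R$ (in particular $\mathcal C_R$ is a left Ore set) and $Q_{cl}(R)=Q_l(R)$.
   Context: Rings are associative with $1$. $\mathcal C_R$ is the set of regular elements of $R$. A multiplicatively closed subset $S$ ($1\in S$, $0\notin S$) is a left Ore set if $Sr\cap Rs\ne\emptyset$ for all $r\in R,s\in S$, and a left denominator set if moreover $rs=0$ ($s\in S$) implies $tr=0$ for some $t\in S$. $S_0(R)$ is the largest left denominator set of $R$ contained in $\mathcal C_R$ (it exists), $Q_l(R):=S_0(R)^{-1}R$, and $Q_{cl}(R):=\mathcal C_R^{-1}R$ is the classical left quotient ring. *)

theory Defs
  imports Main
begin

text \<open>Rings are type-class rings (associative, with 1). Left Ore localisation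
is described by its standard defining (universal) properties.\<close>

definition regular_elems :: "'a::ring_1 set" where
  "regular_elems = {c. (\<forall>r. c * r = 0 \<longrightarrow> r = 0) \<and> (\<forall>r. r * c = 0 \<longrightarrow> r = 0)}"

definition mult_closed :: "'a::ring_1 set \<Rightarrow> bool" where
  "mult_closed S \<longleftrightarrow> 1 \<in> S \<and> 0 \<notin> S \<and> (\<forall>s\<in>S. \<forall>t\<in>S. s * t \<in> S)"

definition left_ore_set :: "'a::ring_1 set \<Rightarrow> bool" where
  "left_ore_set S \<longleftrightarrow> mult_closed S \<and>
     (\<forall>r s. s \<in> S \<longrightarrow> (\<exists>s'\<in>S. \<exists>r'. s' * r = r' * s))"

definition left_denominator_set :: "'a::ring_1 set \<Rightarrow> bool" where
  "left_denominator_set S \<longleftrightarrow> left_ore_set S \<and>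
     (\<forall>r s. s \<in> S \<longrightarrow> r * s = 0 \<longrightarrow> (\<exists>t\<in>S. t * r = 0))"

definition is_S0 :: "'a::ring_1 set \<Rightarrow> bool" where
  "is_S0 S \<longleftrightarrow> left_denominator_set S \<and> S \<subseteq> regular_elems \<and>
     (\<forall>T. left_denominator_set T \<and> T \<subseteq> regular_elems \<longrightarrow> T \<subseteq> S)"

definition ring_hom1 :: "('a::ring_1 \<Rightarrow> 'b::ring_1) \<Rightarrow> bool" where
  "ring_hom1 f \<longleftrightarrow> f 1 = 1 \<and> (\<forall>x y. f (x + y) = f x + f y) \<and> (\<forall>x y. f (x * y) = f x * f y)"

definition is_left_localization :: "'a::ring_1 set \<Rightarrow> ('a \<Rightarrow> 'b::ring_1) \<Rightarrow> bool" where
  "is_left_localization S \<sigma> \<longleftrightarrow> ring_hom1 \<sigma> \<and>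
     (\<forall>s\<in>S. \<exists>u. u * \<sigma> s = 1 \<and> \<sigma> s * u = 1) \<and>
     (\<forall>q. \<exists>s\<in>S. \<exists>r u. u * \<sigma> s = 1 \<and> \<sigma> s * u = 1 \<and> q = u * \<sigma> r) \<and>
     (\<forall>r. \<sigma> r = 0 \<longleftrightarrow> (\<exists>s\<in>S. s * r = 0))"

definition left_ideal :: "'b::ring_1 set \<Rightarrow> bool" where
  "left_ideal I \<longleftrightarrow> 0 \<in> I \<and> (\<forall>x\<in>I. \<forall>y\<in>I. x - y \<in> I) \<and> (\<forall>q. \<forall>x\<in>I. q * x \<in> I)"

definition left_artinian :: "'b::ring_1 itself \<Rightarrow> bool" where
  "left_artinian (_ :: 'b itself) \<longleftrightarrow>
     (\<forall>I :: nat \<Rightarrow> 'b set. (\<forall>n. left_ideal (I n)) \<and> (\<forall>n. I (Suc n) \<subseteq> I n) \<longrightarrow>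
        (\<exists>m. \<forall>n\<ge>m. I n = I m))"

end

theory Submission
  imports Defs
begin

text \<open>In a left artinian ring Q every left regular element a has a left inverse: the
chain of left ideals Q a^n stabilises, so a^m = x a a^m, and cancelling a^m gives x a = 1.
For c regular in R, \<sigma>(c) is left regular in Q: writing q = u \<sigma>(r) with \<sigma>(s) u = 1, the
equation q \<sigma>(c) = 0 forces \<sigma>(r c) = 0, i.e. t r c = 0 for some t \<in> S0, hence t r = 0 and
q = 0. With v \<sigma>(c) = 1, writing \<sigma>(r) v as a left fraction \<sigma>(s)\<inverse> \<sigma>(a) gives
\<sigma>(s r) = \<sigma>(a c), hence t s r = t a c for some t \<in> S0: the left Ore condition for the
regular elements. They then form a left denominator set of regular elements, and
maximality of S0 gives S0 = C_R.\<close>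

lemma left_regular_power:
  fixes a :: "'b::ring_1"
  assumes "\<And>q. q * a = 0 \<Longrightarrow> q = 0"
  shows "q * a ^ n = 0 \<Longrightarrow> q = 0"
proof (induction n arbitrary: q)
  case 0
  then show ?case by simp
next
  case (Suc n)
  then have "(q * a) * a ^ n = 0" by (simp add: mult.assoc)
  then show ?case using Suc.IH assms by blast
qed

lemma left_ideal_left_multiples: "left_ideal {q * x | q. True}"
  unfolding left_ideal_def
proof (intro conjI ballI allI)
  show "0 \<in> {q * x | q. True}" by (metis (mono_tags) CollectI mult_zero_left)
next
  fix y z assume "y \<in> {q * x | q. True}" "z \<in> {q * x | q. True}"
  then obtain q p where "y = q * x" "z = p * x" by blast
  then have "y - z = (q - p) * x" by (simp add: left_diff_distrib)
  then show "y - z \<in> {q * x | q. True}" by blast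
next
  fix p y assume "y \<in> {q * x | q. True}"
  then obtain q where "y = q * x" by blast
  then have "p * y = (p * q) * x" by (simp add: mult.assoc)
  then show "p * y \<in> {q * x | q. True}" by blast
qed

lemma left_artinian_left_regular_imp_left_invertible:
  fixes a :: "'b::ring_1"
  assumes art: "left_artinian TYPE('b)" and reg: "\<And>q. q * a = 0 \<Longrightarrow> q = 0"
  shows "\<exists>x. x * a = 1"
proof -
  define I where "I n = {q * a ^ n | q. True}" for n
  have "\<forall>n. left_ideal (I n)"
    unfolding I_def by (blast intro: left_ideal_left_multiples)
  moreover have "\<forall>n. I (Suc n) \<subseteq> I n"
    unfolding I_def by (auto simp: power_Suc mult.assoc[symmetric])
  ultimately obtain m where "\<forall>n\<ge>m. I n = I m"
    using art unfolding left_artinian_def by blast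
  then have "a ^ m \<in> I (Suc m)"
    unfolding I_def by (metis (mono_tags) CollectI le_SucI order_refl mult_1)
  then obtain x where "a ^ m = (x * a) * a ^ m"
    unfolding I_def by (auto simp: mult.assoc)
  then have "(1 - x * a) * a ^ m = 0" by (simp add: left_diff_distrib)
  then have "1 - x * a = 0" using left_regular_power[OF reg] by blast
  then show ?thesis by auto
qed

lemma ring_hom1_diff: "ring_hom1 f \<Longrightarrow> f (x - y) = f x - f y"
  unfolding ring_hom1_def by (metis add_diff_cancel diff_add_cancel)

lemma left_localization_image_left_regular:
  assumes loc: "is_left_localization S \<sigma>"
    and c: "\<And>r. r * c = 0 \<Longrightarrow> r = 0"
    and q: "q * \<sigma> c = 0"
  shows "q = 0"
proof -
  obtain s r u where s: "s \<in> S" "\<sigma> s * u = 1" and q_eq: "q = u * \<sigma> r"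
    using loc unfolding is_left_localization_def by blast
  have "\<sigma> (r * c) = \<sigma> s * q * \<sigma> c"
    using loc s(2) q_eq
    unfolding is_left_localization_def ring_hom1_def by (simp add: mult.assoc[symmetric])
  then obtain t where "t \<in> S" "(t * r) * c = 0"
    using loc q unfolding is_left_localization_def by (auto simp: mult.assoc)
  then have "\<sigma> r = 0"
    using loc c unfolding is_left_localization_def by blast
  then show "q = 0" using q_eq by simp
qed

lemma left_localization_left_ore_condition:
  assumes loc: "is_left_localization S \<sigma>" and S: "mult_closed S"
    and v: "v * \<sigma> c = 1"
  shows "\<exists>s'\<in>S. \<exists>r'. s' * r = r' * c"
proof -
  have hom: "ring_hom1 \<sigma>" using loc unfolding is_left_localization_def by blast
  obtain s a u where s: "s \<in> S" "\<sigma> s * u = 1" and frac: "\<sigma> r * v = u * \<sigma> a"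
    using loc unfolding is_left_localization_def by blast
  have "\<sigma> s * \<sigma> r = \<sigma> s * (\<sigma> r * v) * \<sigma> c"
    using v by (simp add: mult.assoc)
  also have "\<dots> = (\<sigma> s * u) * \<sigma> a * \<sigma> c"
    using frac by (simp add: mult.assoc)
  finally have "\<sigma> (s * r - a * c) = 0"
    using s(2) hom by (simp add: ring_hom1_diff) (simp add: ring_hom1_def)
  then obtain t where t: "t \<in> S" "t * (s * r - a * c) = 0"
    using loc unfolding is_left_localization_def by blast
  then have "(t * s) * r = (t * a) * c" by (simp add: algebra_simps)
  moreover have "t * s \<in> S" using S s(1) t(1) unfolding mult_closed_def by blast
  ultimately show ?thesis by blast
qed

lemma regular_elems_left_cancel: "c \<in> regular_elems \<Longrightarrow> c * r = 0 \<Longrightarrow> r = 0"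
  and regular_elems_right_cancel: "c \<in> regular_elems \<Longrightarrow> r * c = 0 \<Longrightarrow> r = 0"
  unfolding regular_elems_def by blast+

lemma regular_elemsI:
  "(\<And>r. c * r = 0 \<Longrightarrow> r = 0) \<Longrightarrow> (\<And>r. r * c = 0 \<Longrightarrow> r = 0) \<Longrightarrow> c \<in> regular_elems"
  unfolding regular_elems_def by blast

lemma mult_closed_regular_elems: "mult_closed regular_elems"
  unfolding mult_closed_def
proof (intro conjI ballI)
  show "1 \<in> regular_elems" by (rule regular_elemsI) simp_all
  show "0 \<notin> regular_elems" using regular_elems_left_cancel[of 0 1] by auto
next
  fix s t :: 'a assume "s \<in> regular_elems" "t \<in> regular_elems"
  then show "s * t \<in> regular_elems"
    by (intro regular_elemsI)
      (metis mult.assoc regular_elems_left_cancel regular_elems_right_cancel)+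
qed

lemma left_ore_regular_imp_left_denominator_set:
  assumes "left_ore_set S" and "S \<subseteq> regular_elems"
  shows "left_denominator_set S"
  unfolding left_denominator_set_def
proof (intro conjI allI impI)
  fix r s assume "s \<in> S" "r * s = 0"
  then have "r = 0" using assms(2) regular_elems_right_cancel by blast
  moreover have "1 \<in> S" using assms(1) unfolding left_ore_set_def mult_closed_def by blast
  ultimately show "\<exists>t\<in>S. t * r = 0" by auto
qed (fact assms(1))

theorem corollary2p10:
  fixes S0 :: "'a::ring_1 set" and \<sigma> :: "'a \<Rightarrow> 'b::ring_1"
  assumes "is_S0 S0"
    and "is_left_localization S0 \<sigma>"
    and "left_artinian TYPE('b)"
  shows "S0 = regular_elems \<and> left_ore_set (regular_elems :: 'a set)
         \<and> is_left_localization (regular_elems :: 'a set) \<sigma>"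
proof -
  have S0: "left_denominator_set S0" "S0 \<subseteq> regular_elems"
    "\<And>T. left_denominator_set T \<Longrightarrow> T \<subseteq> regular_elems \<Longrightarrow> T \<subseteq> S0"
    using assms(1) unfolding is_S0_def by blast+
  have "\<exists>v. v * \<sigma> c = 1" if "c \<in> regular_elems" for c
    using that left_artinian_left_regular_imp_left_invertible[OF assms(3)]
      left_localization_image_left_regular[OF assms(2)] regular_elems_right_cancel
    by blast
  moreover have "mult_closed S0"
    using S0(1) unfolding left_denominator_set_def left_ore_set_def by blast
  ultimately have ore: "left_ore_set (regular_elems :: 'a set)"
    using left_localization_left_ore_condition[OF assms(2)] S0(2)
    unfolding left_ore_set_def by (blast intro: mult_closed_regular_elems)
  then have "S0 = regular_elems"
    using S0 left_ore_regular_imp_left_denominator_set by blast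
  then show ?thesis using ore assms(2) by blast
qed

end
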